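(* Let $f:\mathbb{R}^n\to\mathbb{R}$ be bounded below and continuously differentiable with $\nabla f$ Lipschitz with constant $L_{\nabla f}$, where $f(z)=\mathbb{E}_\omega[f(z,\omega)]$ and $\mathrm{Var}_\omega(f(z,\omega))\le\sigma^2$ for all $z\in\mathbb{R}^n$. Let $x\in\mathbb{R}^n$, $\Delta>0$, $p=n+1$, points $y_1,\ldots,y_p$ with $\|y_i-x\|\le\beta\Delta$ for some $\beta>0$ and all $i$, and let $\hat M$ with rows $[1,((y_i-x)/\Delta)^T]$ be invertible. For each $i$, let $\bar f_N(y_i)=\frac1N\sum_{j=1}^Nf(y_i,\omega_{i,j})$ with all $\omega_{i,j}$ i.i.d. realizations of $\omega$ (independent across $i$ and $j$), and define $c,g$ by $\hat M\begin{bmatrix}c\\ \Delta g\end{bmatrix}=\begin{bmatrix}\bar f_N(y_1)\\ \vdots\\ \bar f_N(y_p)\end{bmatrix}$, $m(y)=c+g^T(y-x)$. If $N\ge\frac{\sigma^2}{\epsilon_f^2(1-\alpha_m^{1/p})\Delta^4}$ for some $\epsilon_f>0$ and $\alpha_m\in(0,1)$, then with probability at least $\alpha_m$, for all $y\in B(x,\Delta)$ we have $|m(y)-f(y)|\le\kappa_{\mathrm{mf}}\Delta^2$ and $\|\nabla m(y)-\nabla f(y)\|\le\kappa_{\mathrm{mg}}\Delta$, where $$\kappa_{\mathrm{mf}}=\frac{L_{\nabla f}}{2}(1+\sqrt n)\beta^2\|\hat M^{-1}\|_\infty+\frac{L_{\nabla f}}{2}+(1+\sqrt n)\|\hat M^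{-1}\|_\infty\epsilon_f,\qquad\kappa_{\mathrm{mg}}=2\kappa_{\mathrm{mf}}.$$
   Context: $\|A\|_\infty$ is the maximum absolute row sum; other norms Euclidean; $B(x,\Delta)=\{y:\|y-x\|\le\Delta\}$. *)

theory Defs
  imports "HOL-Probability.Probability"
begin

definition inf_norm_mat :: "real^'m^'m \<Rightarrow> real" where
  "inf_norm_mat A = Max (range (\<lambda>i. \<Sum>j\<in>UNIV. \<bar>A $ i $ j\<bar>))"

text \<open>Interpolation matrix: rows indexed by the p = n+1 sample points ('n option),
  column None is the constant 1, column Some k is the k-th entry of (y_i - x)/Delta.\<close>
definition interp_mat :: "('n::finite option \<Rightarrow> real^'n) \<Rightarrow> real^'n \<Rightarrow> real \<Rightarrow> real^('n option)^('n option)" where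
  "interp_mat y x \<Delta> = (\<chi> i j. case j of None \<Rightarrow> 1 | Some k \<Rightarrow> (y i - x) $ k / \<Delta>)"

definition sample_avg :: "(real^'n \<Rightarrow> 'w \<Rightarrow> real) \<Rightarrow> nat \<Rightarrow> ('n::finite option \<Rightarrow> real^'n)
    \<Rightarrow> ('n option \<times> nat \<Rightarrow> 'w) \<Rightarrow> real^('n option)" where
  "sample_avg F N y \<omega> = (\<chi> i. (\<Sum>j<N. F (y i) (\<omega> (i, j))) / real N)"

definition interp_sol :: "(real^'n \<Rightarrow> 'w \<Rightarrow> real) \<Rightarrow> nat \<Rightarrow> ('n::finite option \<Rightarrow> real^'n)
    \<Rightarrow> real^'n \<Rightarrow> real \<Rightarrow> ('n option \<times> nat \<Rightarrow> 'w) \<Rightarrow> real^('n option)" where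
  "interp_sol F N y x \<Delta> \<omega> = matrix_inv (interp_mat y x \<Delta>) *v sample_avg F N y \<omega>"

definition model_c :: "(real^'n \<Rightarrow> 'w \<Rightarrow> real) \<Rightarrow> nat \<Rightarrow> ('n::finite option \<Rightarrow> real^'n)
    \<Rightarrow> real^'n \<Rightarrow> real \<Rightarrow> ('n option \<times> nat \<Rightarrow> 'w) \<Rightarrow> real" where
  "model_c F N y x \<Delta> \<omega> = interp_sol F N y x \<Delta> \<omega> $ None"

definition model_g :: "(real^'n \<Rightarrow> 'w \<Rightarrow> real) \<Rightarrow> nat \<Rightarrow> ('n::finite option \<Rightarrow> real^'n)
    \<Rightarrow> real^'n \<Rightarrow> real \<Rightarrow> ('n option \<times> nat \<Rightarrow> 'w) \<Rightarrow> real^'n" where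
  "model_g F N y x \<Delta> \<omega> = (\<chi> k. interp_sol F N y x \<Delta> \<omega> $ Some k / \<Delta>)"

definition model :: "(real^'n \<Rightarrow> 'w \<Rightarrow> real) \<Rightarrow> nat \<Rightarrow> ('n::finite option \<Rightarrow> real^'n)
    \<Rightarrow> real^'n \<Rightarrow> real \<Rightarrow> ('n option \<times> nat \<Rightarrow> 'w) \<Rightarrow> real^'n \<Rightarrow> real" where
  "model F N y x \<Delta> \<omega> z = model_c F N y x \<Delta> \<omega> + model_g F N y x \<Delta> \<omega> \<bullet> (z - x)"

end

theory Submission
  imports Defs
begin

text \<open>
  Call a sample good if every average \<open>f\<^sub>N(y\<^sub>i)\<close> is within \<open>\<epsilon>\<^sub>f \<Delta>\<^sup>2\<close> of \<open>f(y\<^sub>i)\<close>.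
  By Chebyshev each of the \<open>p\<close> averages fails with probability at most
  \<open>\<sigma>\<^sup>2 / (N \<epsilon>\<^sub>f\<^sup>2 \<Delta>\<^sup>4) \<le> 1 - \<alpha>\<^sub>m\<^bsup>1/p\<^esup>\<close>, and the averages use disjoint blocks of
  the i.i.d. sample, so they are independent and all succeed with probability at least \<open>\<alpha>\<^sub>m\<close>.
  On a good sample, \<open>[c; \<Delta>g] - [f(x); \<Delta>\<nabla>f(x)]\<close> is \<open>M\<^sup>-\<^sup>1\<close> applied to a vector whose
  entries (sampling error plus Taylor remainder at \<open>y\<^sub>i\<close>) are at most \<open>(\<epsilon>\<^sub>f + L\<beta>\<^sup>2/2)\<Delta>\<^sup>2\<close>;
  the bounds at an arbitrary point of the ball then follow from the Taylor estimate
  \<open>|f(z) - f(x) - \<nabla>f(x)\<^sup>T(z - x)| \<le> L/2 \<parallel>z - x\<parallel>\<^sup>2\<close> and the Lipschitz continuity of \<open>\<nabla>f\<close>.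
\<close>

section \<open>Error of the linear interpolation model\<close>

lemma lipschitz_gradient_linearization_error:
  fixes f :: "'a::real_inner \<Rightarrow> real" and gradf :: "'a \<Rightarrow> 'a"
  assumes deriv: "\<And>z. (f has_derivative (\<lambda>h. gradf z \<bullet> h)) (at z)"
    and lip: "L-lipschitz_on UNIV gradf"
  shows "\<bar>f y - f x - gradf x \<bullet> (y - x)\<bar> \<le> L / 2 * (norm (y - x))\<^sup>2"
proof -
  define d where "d = y - x"
  define h where "h t = f (x + t *\<^sub>R d) - t * (gradf x \<bullet> d)" for t
  have h_deriv: "(h has_real_derivative (gradf (x + t *\<^sub>R d) - gradf x) \<bullet> d) (at t)" for t
  proof -
    have "((\<lambda>t. f (x + t *\<^sub>R d)) has_derivative (\<lambda>s. gradf (x + t *\<^sub>R d) \<bullet> (s *\<^sub>R d))) (at t)"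
      by (rule has_derivative_compose[OF _ deriv]) (auto intro!: derivative_eq_intros)
    then show ?thesis
      unfolding h_def has_field_derivative_def
      by (auto intro!: derivative_eq_intros simp: inner_diff_left algebra_simps)
  qed
  have h_deriv_bound: "\<bar>(gradf (x + t *\<^sub>R d) - gradf x) \<bullet> d\<bar> \<le> L * t * (norm d)\<^sup>2" if "0 \<le> t" for t
  proof -
    have "\<bar>(gradf (x + t *\<^sub>R d) - gradf x) \<bullet> d\<bar> \<le> norm (gradf (x + t *\<^sub>R d) - gradf x) * norm d"
      by (rule Cauchy_Schwarz_ineq2)
    also have "\<dots> \<le> L * norm (t *\<^sub>R d) * norm d"
      using lipschitz_onD[OF lip, of "x + t *\<^sub>R d" x] by (simp add: dist_norm mult_right_mono)
    also have "\<dots> = L * t * (norm d)\<^sup>2" using that by (simp add: power2_eq_square)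
    finally show ?thesis .
  qed
  have "s * (h 1 - h 0) \<le> L / 2 * (norm d)\<^sup>2" if s: "\<bar>s\<bar> = 1" for s
  proof -
    define \<phi> where "\<phi> t = s * h t - L / 2 * t\<^sup>2 * (norm d)\<^sup>2" for t
    have "\<phi> 1 \<le> \<phi> 0"
    proof (rule DERIV_nonpos_imp_nonincreasing[of 0 1])
      fix t :: real assume t: "0 \<le> t" "t \<le> 1"
      have "(\<phi> has_real_derivative s * ((gradf (x + t *\<^sub>R d) - gradf x) \<bullet> d) - L * t * (norm d)\<^sup>2) (at t)"
        unfolding \<phi>_def by (auto intro!: derivative_eq_intros h_deriv simp: power2_eq_square)
      moreover have "s * ((gradf (x + t *\<^sub>R d) - gradf x) \<bullet> d) \<le> L * t * (norm d)\<^sup>2"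
        using h_deriv_bound[OF t(1)] s by (simp add: abs_mult order_trans[OF abs_ge_self])
      ultimately show "\<exists>D. (\<phi> has_real_derivative D) (at t) \<and> D \<le> 0" by auto
    qed simp
    then show ?thesis by (simp add: \<phi>_def algebra_simps)
  qed
  from this[of 1] this[of "-1"] have "\<bar>h 1 - h 0\<bar> \<le> L / 2 * (norm d)\<^sup>2" unfolding abs_le_iff by simp
  then show ?thesis by (simp add: h_def d_def algebra_simps)
qed

lemma matrix_inv_mult_left:
  fixes A :: "'a::semiring_1^'n^'m"
  assumes "invertible A"
  shows "matrix_inv A ** A = mat 1"
  using someI_ex[OF assms[unfolded invertible_def]] unfolding matrix_inv_def by blast

lemma norm_le_sqrt_CARD_mult:
  fixes w :: "real^'n"
  assumes "\<And>k. \<bar>w $ k\<bar> \<le> B"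
  shows "norm w \<le> sqrt (real CARD('n)) * B"
proof -
  have "0 \<le> B" using assms[of undefined] by linarith
  have "(\<Sum>k\<in>UNIV. (w $ k)\<^sup>2) \<le> (\<Sum>k\<in>(UNIV::'n set). B\<^sup>2)"
    by (intro sum_mono) (metis abs_ge_zero assms power2_abs power_mono)
  then have "sqrt (\<Sum>k\<in>UNIV. (w $ k)\<^sup>2) \<le> sqrt (real CARD('n) * B\<^sup>2)"
    by simp
  then show ?thesis
    using \<open>0 \<le> B\<close> by (simp add: norm_vec_def L2_set_def real_sqrt_mult)
qed

lemma row_sum_le_inf_norm_mat: "(\<Sum>j\<in>UNIV. \<bar>A $ i $ j\<bar>) \<le> inf_norm_mat A"
  unfolding inf_norm_mat_def by (rule Max_ge) auto

lemma inf_norm_mat_nonneg: "0 \<le> inf_norm_mat A"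
  by (rule order_trans[OF sum_nonneg row_sum_le_inf_norm_mat]) simp

lemma abs_mat_vec_nth_le_inf_norm_mat:
  fixes A :: "real^'m^'m" and v :: "real^'m"
  assumes "\<And>j. \<bar>v $ j\<bar> \<le> E"
  shows "\<bar>(A *v v) $ i\<bar> \<le> inf_norm_mat A * E"
proof -
  have "0 \<le> E" using assms[of undefined] by linarith
  have "\<bar>(A *v v) $ i\<bar> \<le> (\<Sum>j\<in>UNIV. \<bar>A $ i $ j\<bar> * \<bar>v $ j\<bar>)"
    unfolding matrix_vector_mult_def by (simp add: sum_abs[THEN order_trans] abs_mult)
  also have "\<dots> \<le> (\<Sum>j\<in>UNIV. \<bar>A $ i $ j\<bar>) * E"
    unfolding sum_distrib_right by (intro sum_mono mult_left_mono assms) auto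
  also have "\<dots> \<le> inf_norm_mat A * E"
    by (rule mult_right_mono[OF row_sum_le_inf_norm_mat \<open>0 \<le> E\<close>])
  finally show ?thesis .
qed

lemma interp_mat_mult_vec_nth:
  "(interp_mat y x \<Delta> *v v) $ i = v $ None + (\<Sum>k\<in>UNIV. (y i - x) $ k / \<Delta> * v $ Some k)"
  by (simp add: matrix_vector_mult_def interp_mat_def UNIV_option_conv sum.reindex)

lemma interp_coeffs_error:
  fixes f :: "real^'n \<Rightarrow> real" and gradf :: "real^'n \<Rightarrow> real^'n" and s :: "real^'n option"
  assumes deriv: "\<And>z. (f has_derivative (\<lambda>h. gradf z \<bullet> h)) (at z)"
    and lip: "L-lipschitz_on UNIV gradf"
    and \<Delta>: "\<Delta> > 0"
    and ypts: "\<And>i. norm (y i - x) \<le> \<beta> * \<Delta>"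
    and inv: "invertible (interp_mat y x \<Delta>)"
    and data: "\<And>i. \<bar>s $ i - f (y i)\<bar> \<le> \<epsilon> * \<Delta>\<^sup>2"
  defines "v \<equiv> \<chi> i. case i of None \<Rightarrow> f x | Some k \<Rightarrow> \<Delta> * gradf x $ k"
  shows "\<bar>(matrix_inv (interp_mat y x \<Delta>) *v s - v) $ i\<bar>
           \<le> inf_norm_mat (matrix_inv (interp_mat y x \<Delta>)) * ((\<epsilon> + L / 2 * \<beta>\<^sup>2) * \<Delta>\<^sup>2)"
proof -
  let ?M = "interp_mat y x \<Delta>"
  have "0 \<le> L" using lipschitz_on_nonneg[OF lip] .
  have Mv: "(?M *v v) $ i = f x + gradf x \<bullet> (y i - x)" for i
    using \<Delta> by (simp add: interp_mat_mult_vec_nth v_def inner_vec_def mult.commute)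
  have "matrix_inv ?M *v s - v = matrix_inv ?M *v (s - ?M *v v)"
    by (simp add: matrix_vector_mult_diff_distrib matrix_vector_mul_assoc matrix_inv_mult_left[OF inv])
  moreover have "\<bar>(s - ?M *v v) $ i\<bar> \<le> (\<epsilon> + L / 2 * \<beta>\<^sup>2) * \<Delta>\<^sup>2" for i
  proof -
    have "\<bar>f (y i) - f x - gradf x \<bullet> (y i - x)\<bar> \<le> L / 2 * (norm (y i - x))\<^sup>2"
      by (rule lipschitz_gradient_linearization_error[OF deriv lip])
    also have "\<dots> \<le> L / 2 * (\<beta> * \<Delta>)\<^sup>2"
      using ypts[of i] \<open>0 \<le> L\<close> by (intro mult_left_mono power_mono) auto
    finally have taylor: "\<bar>f (y i) - f x - gradf x \<bullet> (y i - x)\<bar> \<le> L / 2 * (\<beta> * \<Delta>)\<^sup>2" .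
    have "(s - ?M *v v) $ i = (s $ i - f (y i)) + (f (y i) - f x - gradf x \<bullet> (y i - x))"
      by (simp add: Mv)
    moreover have "(\<epsilon> + L / 2 * \<beta>\<^sup>2) * \<Delta>\<^sup>2 = \<epsilon> * \<Delta>\<^sup>2 + L / 2 * (\<beta> * \<Delta>)\<^sup>2"
      by (simp add: power_mult_distrib algebra_simps)
    ultimately show ?thesis
      using data[of i] taylor by linarith
  qed
  ultimately show ?thesis
    by (simp add: abs_mat_vec_nth_le_inf_norm_mat)
qed

lemma linear_model_error:
  fixes f :: "'a::real_inner \<Rightarrow> real" and gradf :: "'a \<Rightarrow> 'a"
  assumes deriv: "\<And>z. (f has_derivative (\<lambda>h. gradf z \<bullet> h)) (at z)"
    and lip: "L-lipschitz_on UNIV gradf"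
    and c: "\<bar>c - f x\<bar> \<le> a * \<Delta>\<^sup>2"
    and g: "norm (g - gradf x) \<le> b * \<Delta>"
    and z: "norm (z - x) \<le> \<Delta>"
  shows "\<bar>c + g \<bullet> (z - x) - f z\<bar> \<le> (a + b + L / 2) * \<Delta>\<^sup>2"
    and "norm (g - gradf z) \<le> (b + L) * \<Delta>"
proof -
  have "0 \<le> L" using lipschitz_on_nonneg[OF lip] .
  have "\<bar>f z - f x - gradf x \<bullet> (z - x)\<bar> \<le> L / 2 * (norm (z - x))\<^sup>2"
    by (rule lipschitz_gradient_linearization_error[OF deriv lip])
  also have "\<dots> \<le> L / 2 * \<Delta>\<^sup>2"
    using z \<open>0 \<le> L\<close> by (intro mult_left_mono power_mono) auto
  finally have taylor: "\<bar>f z - f x - gradf x \<bullet> (z - x)\<bar> \<le> L / 2 * \<Delta>\<^sup>2" .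
  have "\<bar>(g - gradf x) \<bullet> (z - x)\<bar> \<le> norm (g - gradf x) * norm (z - x)"
    by (rule Cauchy_Schwarz_ineq2)
  also have "\<dots> \<le> b * \<Delta> * \<Delta>"
    using g z by (intro mult_mono) (auto intro: order_trans[OF norm_ge_zero])
  finally have "\<bar>(g - gradf x) \<bullet> (z - x)\<bar> \<le> b * \<Delta>\<^sup>2"
    by (simp add: power2_eq_square mult.assoc)
  moreover have "c + g \<bullet> (z - x) - f z
      = (c - f x) + (g - gradf x) \<bullet> (z - x) - (f z - f x - gradf x \<bullet> (z - x))"
    by (simp add: inner_diff_left)
  moreover have "(a + b + L / 2) * \<Delta>\<^sup>2 = a * \<Delta>\<^sup>2 + b * \<Delta>\<^sup>2 + L / 2 * \<Delta>\<^sup>2"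
    by (simp add: algebra_simps)
  ultimately show "\<bar>c + g \<bullet> (z - x) - f z\<bar> \<le> (a + b + L / 2) * \<Delta>\<^sup>2"
    using c taylor by linarith
  have "norm (gradf x - gradf z) \<le> L * \<Delta>"
    using lipschitz_onD[OF lip, of x z] z \<open>0 \<le> L\<close>
    by (simp add: dist_norm norm_minus_commute mult_left_mono order_trans)
  then show "norm (g - gradf z) \<le> (b + L) * \<Delta>"
    using g norm_triangle_ineq[of "g - gradf x" "gradf x - gradf z"] by (simp add: algebra_simps)
qed

lemma model_error_bounds:
  fixes f :: "real^'n \<Rightarrow> real" and gradf :: "real^'n \<Rightarrow> real^'n"
    and F :: "real^'n \<Rightarrow> 'w \<Rightarrow> real" and y :: "'n option \<Rightarrow> real^'n"
  assumes deriv: "\<And>z. (f has_derivative (\<lambda>h. gradf z \<bullet> h)) (at z)"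
    and lip: "L-lipschitz_on UNIV gradf"
    and \<Delta>: "\<Delta> > 0"
    and ypts: "\<And>i. norm (y i - x) \<le> \<beta> * \<Delta>"
    and inv: "invertible (interp_mat y x \<Delta>)"
    and data: "\<And>i. \<bar>sample_avg F N y \<omega> $ i - f (y i)\<bar> \<le> \<epsilon> * \<Delta>\<^sup>2"
    and z: "norm (z - x) \<le> \<Delta>"
  defines "\<kappa> \<equiv> L / 2 * (1 + sqrt (real CARD('n))) * \<beta>\<^sup>2 * inf_norm_mat (matrix_inv (interp_mat y x \<Delta>))
             + L / 2 + (1 + sqrt (real CARD('n))) * inf_norm_mat (matrix_inv (interp_mat y x \<Delta>)) * \<epsilon>"
  shows "\<bar>model F N y x \<Delta> \<omega> z - f z\<bar> \<le> \<kappa> * \<Delta>\<^sup>2"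
    and "norm (model_g F N y x \<Delta> \<omega> - gradf z) \<le> 2 * \<kappa> * \<Delta>"
proof -
  define K where "K = inf_norm_mat (matrix_inv (interp_mat y x \<Delta>)) * (\<epsilon> + L / 2 * \<beta>\<^sup>2)"
  define v :: "real^'n option" where "v = (\<chi> i. case i of None \<Rightarrow> f x | Some k \<Rightarrow> \<Delta> * gradf x $ k)"
  have "0 \<le> \<epsilon> * \<Delta>\<^sup>2" using data[of undefined] by linarith
  then have "0 \<le> \<epsilon>" using \<Delta> by (simp add: zero_le_mult_iff)
  then have "0 \<le> K"
    unfolding K_def using lipschitz_on_nonneg[OF lip] by (simp add: inf_norm_mat_nonneg)
  have coeffs: "\<bar>(interp_sol F N y x \<Delta> \<omega> - v) $ i\<bar> \<le> K * \<Delta>\<^sup>2" for i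
    using interp_coeffs_error[OF deriv lip \<Delta> ypts inv data]
    unfolding K_def v_def interp_sol_def by (simp add: mult.assoc)
  have c: "\<bar>model_c F N y x \<Delta> \<omega> - f x\<bar> \<le> K * \<Delta>\<^sup>2"
    using coeffs[of None] by (simp add: model_c_def v_def)
  have "\<bar>(model_g F N y x \<Delta> \<omega> - gradf x) $ k\<bar> \<le> K * \<Delta>" for k
  proof -
    have "(model_g F N y x \<Delta> \<omega> - gradf x) $ k = (interp_sol F N y x \<Delta> \<omega> - v) $ Some k / \<Delta>"
      using \<Delta> by (simp add: model_g_def v_def field_simps)
    then show ?thesis
      using coeffs[of "Some k"] \<Delta> by (simp add: abs_div pos_divide_le_eq power2_eq_square)
  qed
  then have g: "norm (model_g F N y x \<Delta> \<omega> - gradf x) \<le> (sqrt (real CARD('n)) * K) * \<Delta>"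
    unfolding mult.assoc by (rule norm_le_sqrt_CARD_mult)
  have \<kappa>: "\<kappa> = K + sqrt (real CARD('n)) * K + L / 2"
    unfolding \<kappa>_def K_def by (simp add: algebra_simps)
  show "\<bar>model F N y x \<Delta> \<omega> z - f z\<bar> \<le> \<kappa> * \<Delta>\<^sup>2"
    using linear_model_error(1)[OF deriv lip c g z] unfolding \<kappa> model_def .
  have "(sqrt (real CARD('n)) * K + L) * \<Delta> \<le> 2 * \<kappa> * \<Delta>"
    unfolding \<kappa> using \<open>0 \<le> K\<close> \<Delta> by (intro mult_right_mono) auto
  with linear_model_error(2)[OF deriv lip c g z]
  show "norm (model_g F N y x \<Delta> \<omega> - gradf z) \<le> 2 * \<kappa> * \<Delta>" by linarith
qed

section \<open>Sample averages on a product probability space\<close>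

lemma
  fixes h :: "'w \<Rightarrow> real"
  assumes P: "prob_space P" and a: "a \<in> I" and h: "h \<in> borel_measurable P"
  shows integrable_PiM_component_iff:
      "integrable (PiM I (\<lambda>_. P)) (\<lambda>\<omega>. h (\<omega> a)) \<longleftrightarrow> integrable P h"
    and integral_PiM_component: "(\<integral>\<omega>. h (\<omega> a) \<partial>PiM I (\<lambda>_. P)) = integral\<^sup>L P h"
proof -
  have distr: "distr (PiM I (\<lambda>_. P)) P (\<lambda>\<omega>. \<omega> a) = P"
    using distr_PiM_component[OF P a] .
  have meas: "(\<lambda>\<omega>. \<omega> a) \<in> measurable (PiM I (\<lambda>_. P)) P"
    using a by (rule measurable_component_singleton)
  show "integrable (PiM I (\<lambda>_. P)) (\<lambda>\<omega>. h (\<omega> a)) \<longleftrightarrow> integrable P h"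
    using integrable_distr_eq[OF meas h] distr by simp
  show "(\<integral>\<omega>. h (\<omega> a) \<partial>PiM I (\<lambda>_. P)) = integral\<^sup>L P h"
    using integral_distr[OF meas h] distr by simp
qed

lemma
  fixes h :: "'i \<Rightarrow> 'w \<Rightarrow> real"
  assumes P: "prob_space P" and I: "finite I" "J \<subseteq> I" and h: "\<And>j. j \<in> J \<Longrightarrow> integrable P (h j)"
  shows integrable_PiM_prod_components: "integrable (PiM I (\<lambda>_. P)) (\<lambda>\<omega>. \<Prod>j\<in>J. h j (\<omega> j))"
    and integral_PiM_prod_components:
      "(\<integral>\<omega>. (\<Prod>j\<in>J. h j (\<omega> j)) \<partial>PiM I (\<lambda>_. P)) = (\<Prod>j\<in>J. integral\<^sup>L P (h j))"
proof -
  interpret P: prob_space P by (rule P)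
  interpret product_sigma_finite "\<lambda>_. P" ..
  define g where "g j = (if j \<in> J then h j else (\<lambda>_. 1))" for j
  have g: "integrable P (g j)" for j
    using h by (simp add: g_def)
  have g_apply: "g j w = (if j \<in> J then h j w else 1)" for j w
    by (simp add: g_def)
  have restrict_J: "(\<Prod>j\<in>I. if j \<in> J then u j else 1) = (\<Prod>j\<in>J. u j)" for u :: "'i \<Rightarrow> real"
    using I by (simp add: prod.inter_restrict[symmetric] Int_absorb1)
  have "(\<lambda>\<omega>. \<Prod>j\<in>J. h j (\<omega> j)) = (\<lambda>\<omega>. \<Prod>j\<in>I. g j (\<omega> j))"
    by (simp add: g_apply restrict_J)
  moreover have "(\<Prod>j\<in>J. integral\<^sup>L P (h j)) = (\<Prod>j\<in>I. integral\<^sup>L P (g j))"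
    by (simp add: g_def if_distrib P.prob_space restrict_J cong: if_cong)
  ultimately show "integrable (PiM I (\<lambda>_. P)) (\<lambda>\<omega>. \<Prod>j\<in>J. h j (\<omega> j))"
    and "(\<integral>\<omega>. (\<Prod>j\<in>J. h j (\<omega> j)) \<partial>PiM I (\<lambda>_. P)) = (\<Prod>j\<in>J. integral\<^sup>L P (h j))"
    using product_integrable_prod[OF I(1) g] product_integral_prod[OF I(1) g] by simp_all
qed

lemma
  fixes h :: "'w \<Rightarrow> real"
  assumes P: "prob_space P" and I: "finite I" "J \<subseteq> I"
    and h: "integrable P h" "integrable P (\<lambda>w. (h w)\<^sup>2)" and centered: "integral\<^sup>L P h = 0"
  shows integrable_PiM_sum_components_square:
      "integrable (PiM I (\<lambda>_. P)) (\<lambda>\<omega>. (\<Sum>j\<in>J. h (\<omega> j))\<^sup>2)"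
    and integral_PiM_sum_components_square:
      "(\<integral>\<omega>. (\<Sum>j\<in>J. h (\<omega> j))\<^sup>2 \<partial>PiM I (\<lambda>_. P)) = card J * integral\<^sup>L P (\<lambda>w. (h w)\<^sup>2)"
proof -
  let ?Q = "PiM I (\<lambda>_. P)"
  have "finite J" using I finite_subset by blast
  have square: "(\<Sum>j\<in>J. h (\<omega> j))\<^sup>2 = (\<Sum>j\<in>J. \<Sum>k\<in>J. h (\<omega> j) * h (\<omega> k))" for \<omega>
    by (simp add: power2_eq_square sum_product)
  have cross: "integrable ?Q (\<lambda>\<omega>. h (\<omega> j) * h (\<omega> k)) \<and>
      (\<integral>\<omega>. h (\<omega> j) * h (\<omega> k) \<partial>?Q) = (if j = k then integral\<^sup>L P (\<lambda>w. (h w)\<^sup>2) else 0)"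
    if "j \<in> J" "k \<in> J" for j k
  proof (cases "j = k")
    case True
    have "k \<in> I" and meas: "(\<lambda>w. h w * h w) \<in> borel_measurable P"
      using that I h(2) by (auto simp: power2_eq_square)
    then show ?thesis
      using True h(2) integrable_PiM_component_iff[OF P \<open>k \<in> I\<close> meas]
        integral_PiM_component[OF P \<open>k \<in> I\<close> meas]
      by (simp add: power2_eq_square)
  next
    case False
    have "{j, k} \<subseteq> I" using that I by auto
    then show ?thesis
      using False h(1) centered integrable_PiM_prod_components[OF P I(1), of "{j, k}" "\<lambda>_. h"]
        integral_PiM_prod_components[OF P I(1), of "{j, k}" "\<lambda>_. h"]
      by simp
  qed
  show "integrable ?Q (\<lambda>\<omega>. (\<Sum>j\<in>J. h (\<omega> j))\<^sup>2)"
    unfolding square using cross by (intro Bochner_Integration.integrable_sum) auto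
  have "(\<integral>\<omega>. (\<Sum>j\<in>J. h (\<omega> j))\<^sup>2 \<partial>?Q) = (\<Sum>j\<in>J. \<Sum>k\<in>J. \<integral>\<omega>. h (\<omega> j) * h (\<omega> k) \<partial>?Q)"
    unfolding square using cross
    by (simp add: Bochner_Integration.integral_sum Bochner_Integration.integrable_sum)
  also have "\<dots> = (\<Sum>j\<in>J. \<Sum>k\<in>J. if j = k then integral\<^sup>L P (\<lambda>w. (h w)\<^sup>2) else 0)"
    using cross by (intro sum.cong) auto
  also have "\<dots> = card J * integral\<^sup>L P (\<lambda>w. (h w)\<^sup>2)"
    using \<open>finite J\<close> by simp
  finally show "(\<integral>\<omega>. (\<Sum>j\<in>J. h (\<omega> j))\<^sup>2 \<partial>?Q) = card J * integral\<^sup>L P (\<lambda>w. (h w)\<^sup>2)" .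
qed

lemma sample_avg_deviation_prob_le:
  fixes F :: "real^'n \<Rightarrow> 'w \<Rightarrow> real" and y :: "'n option \<Rightarrow> real^'n"
  assumes P: "prob_space P"
    and integ: "integrable P (F (y i))" and integ2: "integrable P (\<lambda>\<omega>. (F (y i) \<omega>)\<^sup>2)"
    and mean: "f (y i) = prob_space.expectation P (F (y i))"
    and var: "prob_space.variance P (F (y i)) \<le> \<sigma>\<^sup>2"
    and N: "N > 0" and a: "a > 0"
  defines "Q \<equiv> PiM (UNIV \<times> {..<N}) (\<lambda>_. P)"
  shows "measure Q {\<omega> \<in> space Q. a \<le> \<bar>sample_avg F N y \<omega> $ i - f (y i)\<bar>} \<le> \<sigma>\<^sup>2 / (real N * a\<^sup>2)"
proof -
  interpret P: prob_space P by (rule P)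
  interpret Q: prob_space Q unfolding Q_def by (rule prob_space_PiM) (rule P)
  define h where "h = (\<lambda>w. F (y i) w - f (y i))"
  define J where "J = Pair i ` {..<N}"
  define S where "S \<omega> = (\<Sum>l\<in>J. h (\<omega> l))" for \<omega>
  have inj: "inj_on (Pair i) {..<N}"
    by (simp add: inj_on_def)
  have J: "J \<subseteq> UNIV \<times> {..<N}" "card J = N"
    using card_image[OF inj] by (auto simp: J_def)
  have h: "integrable P h" "integrable P (\<lambda>w. (h w)\<^sup>2)"
    using integ integ2 by (auto simp: h_def power2_diff)
  have "integral\<^sup>L P h = 0"
    using integ mean by (simp add: h_def P.prob_space)
  note S_square = integrable_PiM_sum_components_square[OF P _ J(1) h this]
    integral_PiM_sum_components_square[OF P _ J(1) h this]
  have "integral\<^sup>L P (\<lambda>w. (h w)\<^sup>2) \<le> \<sigma>\<^sup>2"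
    using var mean by (simp add: h_def)
  have S_meas: "S \<in> borel_measurable Q"
    using h(1) J(1) unfolding S_def Q_def by (auto intro!: borel_measurable_sum)
  have "sample_avg F N y \<omega> $ i - f (y i) = S \<omega> / N" for \<omega>
    using N card_image[OF inj]
    by (simp add: sample_avg_def S_def J_def h_def sum.reindex[OF inj] sum_subtractf field_simps)
  then have "{\<omega> \<in> space Q. a \<le> \<bar>sample_avg F N y \<omega> $ i - f (y i)\<bar>} = {\<omega> \<in> space Q. N * a \<le> \<bar>S \<omega>\<bar>}"
    using N by (auto simp: abs_div le_divide_eq mult.commute)
  also have "measure Q \<dots> \<le> (\<integral>\<omega>. (S \<omega>)\<^sup>2 \<partial>Q) / (N * a)\<^sup>2"
    using Q.second_moment_method[OF S_meas] S_square(1) N a unfolding S_def Q_def by simp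
  also have "\<dots> \<le> N * \<sigma>\<^sup>2 / (N * a)\<^sup>2"
    using S_square(2) J(2) \<open>integral\<^sup>L P (\<lambda>w. (h w)\<^sup>2) \<le> \<sigma>\<^sup>2\<close> N
    unfolding S_def Q_def by (intro divide_right_mono) auto
  also have "\<dots> = \<sigma>\<^sup>2 / (real N * a\<^sup>2)"
    using N by (simp add: power2_eq_square)
  finally show ?thesis .
qed

lemma indep_vars_PiM_components:
  assumes P: "prob_space P"
  shows "prob_space.indep_vars (PiM I (\<lambda>_. P)) (\<lambda>_. P) (\<lambda>i \<omega>. \<omega> i) I"
proof (cases "I = {}")
  case True
  interpret Q: prob_space "PiM I (\<lambda>_. P)" by (rule prob_space_PiM) (rule P)
  show ?thesis
    unfolding Q.indep_vars_def Q.indep_sets_def using True by simp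
next
  case False
  define Q where "Q = PiM I (\<lambda>_. P)"
  interpret Q: prob_space Q unfolding Q_def by (rule prob_space_PiM) (rule P)
  have "distr Q (PiM I (\<lambda>_. P)) (\<lambda>\<omega>. \<lambda>i\<in>I. \<omega> i) = distr Q Q (\<lambda>\<omega>. \<omega>)"
    by (rule distr_cong) (auto simp: Q_def space_PiM PiE_def extensional_restrict)
  also have "\<dots> = PiM I (\<lambda>i. distr Q P (\<lambda>\<omega>. \<omega> i))"
    unfolding distr_id Q_def by (rule PiM_cong) (auto simp: distr_PiM_component[OF P])
  finally show ?thesis
    using Q.indep_vars_iff_distr_eq_PiM'[OF False, of "\<lambda>i \<omega>. \<omega> i" "\<lambda>_. P"]
    by (simp add: Q_def measurable_component_singleton)
qed

lemma prob_sample_avgs_close_ge: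
  fixes F :: "real^'n \<Rightarrow> 'w \<Rightarrow> real" and y :: "'n option \<Rightarrow> real^'n"
  assumes P: "prob_space P"
    and integ: "\<And>i. integrable P (F (y i))" and integ2: "\<And>i. integrable P (\<lambda>\<omega>. (F (y i) \<omega>)\<^sup>2)"
    and mean: "\<And>i. f (y i) = prob_space.expectation P (F (y i))"
    and var: "\<And>i. prob_space.variance P (F (y i)) \<le> \<sigma>\<^sup>2"
    and N: "N > 0" and a: "a > 0" and r: "0 \<le> r" "\<sigma>\<^sup>2 / (real N * a\<^sup>2) \<le> 1 - r"
  defines "Q \<equiv> PiM (UNIV \<times> {..<N}) (\<lambda>_. P)"
    and "A \<equiv> {\<omega> \<in> space (PiM (UNIV \<times> {..<N}) (\<lambda>_. P)). \<forall>i. \<bar>sample_avg F N y \<omega> $ i - f (y i)\<bar> < a}"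
  shows "A \<in> sets Q" and "r ^ CARD('n option) \<le> measure Q A"
proof -
  interpret Q: prob_space Q unfolding Q_def by (rule prob_space_PiM) (rule P)
  define K where "K i = {i} \<times> {..<N}" for i :: "'n option"
  define G where "G i = {\<omega> \<in> space Q. \<bar>sample_avg F N y \<omega> $ i - f (y i)\<bar> < a}" for i
  define B where "B i = {v \<in> space (PiM (K i) (\<lambda>_. P)). \<bar>sample_avg F N y v $ i - f (y i)\<bar> < a}" for i
  have avg_meas: "(\<lambda>\<omega>. sample_avg F N y \<omega> $ i) \<in> borel_measurable (PiM J (\<lambda>_. P))"
    if "K i \<subseteq> J" for i J
  proof -
    have "F (y i) \<in> borel_measurable P" using integ by auto
    then have "(\<lambda>\<omega>. F (y i) (\<omega> (i, j))) \<in> borel_measurable (PiM J (\<lambda>_. P))" if "j < N" for j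
      using measurable_comp[OF measurable_component_singleton[of "(i, j)" J "\<lambda>_. P"]] that \<open>K i \<subseteq> J\<close>
      by (auto simp: K_def o_def)
    then show ?thesis
      unfolding sample_avg_def by (auto intro!: borel_measurable_divide borel_measurable_sum)
  qed
  have indep: "Q.indep_vars (\<lambda>i. PiM (K i) (\<lambda>_. P)) (\<lambda>i \<omega>. restrict \<omega> (K i)) UNIV"
    using indep_vars_PiM_components[OF P, of "(UNIV :: 'n option set) \<times> {..<N}", folded Q_def]
    by (rule Q.indep_vars_restrict) (auto simp: K_def disjoint_family_on_def)
  have B: "B i \<in> sets (PiM (K i) (\<lambda>_. P))" for i
    using avg_meas[of i "K i"] unfolding B_def by measurable
  have G_eq: "G i = (\<lambda>\<omega>. restrict \<omega> (K i)) -` B i \<inter> space Q" for i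
  proof -
    have "restrict \<omega> (K i) \<in> space (PiM (K i) (\<lambda>_. P))" if "\<omega> \<in> space Q" for \<omega>
      using that by (auto simp: Q_def K_def space_PiM)
    moreover have "sample_avg F N y (restrict \<omega> (K i)) $ i = sample_avg F N y \<omega> $ i" for \<omega>
      by (simp add: sample_avg_def K_def)
    ultimately show ?thesis by (auto simp: G_def B_def)
  qed
  have G: "G i \<in> sets Q" for i
    using avg_meas[of i] unfolding G_def Q_def K_def by measurable auto
  have "r \<le> measure Q (G i)" for i
  proof -
    have "space Q - G i = {\<omega> \<in> space Q. a \<le> \<bar>sample_avg F N y \<omega> $ i - f (y i)\<bar>}"
      by (auto simp: G_def)
    then have "1 - measure Q (G i) \<le> \<sigma>\<^sup>2 / (real N * a\<^sup>2)"
      using sample_avg_deviation_prob_le[where F=F and y=y and i=i and f=f, OF P integ integ2 mean var N a] Q.prob_compl[OF G[of i]]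
      unfolding Q_def by simp
    with r(2) show ?thesis by simp
  qed
  then have "(\<Prod>i\<in>(UNIV :: 'n option set). r) \<le> (\<Prod>i\<in>UNIV. measure Q (G i))"
    using r(1) by (intro prod_mono) auto
  then have "r ^ CARD('n option) \<le> (\<Prod>i\<in>UNIV. measure Q (G i))"
    by (simp only: prod_constant)
  also have "\<dots> = measure Q (\<Inter>i. G i)"
    using Q.indep_varsD[OF indep, of UNIV B] B by (simp add: G_eq)
  also have "(\<Inter>i. G i) = A"
    by (auto simp: A_def G_def Q_def)
  finally show "r ^ CARD('n option) \<le> measure Q A" .
  show "A \<in> sets Q"
    unfolding \<open>(\<Inter>i. G i) = A\<close>[symmetric] using G by (intro sets.finite_INT) auto
qed

theorem theorem8p11:
  fixes f :: "real^'n \<Rightarrow> real" and gradf :: "real^'n \<Rightarrow> real^'n"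
    and F :: "real^'n \<Rightarrow> 'w \<Rightarrow> real" and P :: "'w measure"
    and L \<sigma> \<Delta> \<beta> \<epsilon>f \<alpha>m :: real and x :: "real^'n"
    and y :: "'n option \<Rightarrow> real^'n" and N :: nat
  assumes P: "prob_space P"
    and bdd_below: "\<exists>b. \<forall>z. b \<le> f z"
    and deriv: "\<And>z. (f has_derivative (\<lambda>h. gradf z \<bullet> h)) (at z)"
    and lip: "L-lipschitz_on UNIV gradf"
    and integ: "\<And>z. integrable P (F z)"
    and integ2: "\<And>z. integrable P (\<lambda>\<omega>. (F z \<omega>)\<^sup>2)"
    and mean: "\<And>z. f z = prob_space.expectation P (F z)"
    and var: "\<And>z. prob_space.variance P (F z) \<le> \<sigma>\<^sup>2"
    and \<Delta>: "\<Delta> > 0" and \<beta>: "\<beta> > 0"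
    and ypts: "\<And>i. norm (y i - x) \<le> \<beta> * \<Delta>"
    and inv: "invertible (interp_mat y x \<Delta>)"
    and \<epsilon>f: "\<epsilon>f > 0" and \<alpha>m: "0 < \<alpha>m" "\<alpha>m < 1"
    and N_pos: "N > 0"
    and N_bound: "real N \<ge> \<sigma>\<^sup>2 / (\<epsilon>f\<^sup>2 * (1 - \<alpha>m powr (1 / real (CARD('n) + 1))) * \<Delta> ^ 4)"
  shows "\<exists>A \<in> sets (PiM (UNIV \<times> {..<N}) (\<lambda>_. P)).
           measure (PiM (UNIV \<times> {..<N}) (\<lambda>_. P)) A \<ge> \<alpha>m \<and>
           (\<forall>\<omega>\<in>A. \<forall>z. norm (z - x) \<le> \<Delta> \<longrightarrow>
              (let \<kappa>mf = L / 2 * (1 + sqrt (real CARD('n))) * \<beta>\<^sup>2 * inf_norm_mat (matrix_inv (interp_mat y x \<Delta>))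
                          + L / 2 + (1 + sqrt (real CARD('n))) * inf_norm_mat (matrix_inv (interp_mat y x \<Delta>)) * \<epsilon>f;
                   \<kappa>mg = 2 * \<kappa>mf
               in \<bar>model F N y x \<Delta> \<omega> z - f z\<bar> \<le> \<kappa>mf * \<Delta>\<^sup>2 \<and>
                  norm (model_g F N y x \<Delta> \<omega> - gradf z) \<le> \<kappa>mg * \<Delta>))"
proof -
  define a where "a = \<epsilon>f * \<Delta>\<^sup>2"
  define r where "r = root CARD('n option) \<alpha>m"
  define A where "A = {\<omega> \<in> space (PiM (UNIV \<times> {..<N}) (\<lambda>_. P)).
    \<forall>i. \<bar>sample_avg F N y \<omega> $ i - f (y i)\<bar> < a}"
  have "0 < a" using \<epsilon>f \<Delta> by (simp add: a_def)
  have r: "0 \<le> r" "r < 1" using \<alpha>m by (simp_all add: r_def)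
  have "\<alpha>m powr (1 / real (CARD('n) + 1)) = r"
    using \<alpha>m by (simp add: r_def root_powr_inverse)
  then have "\<sigma>\<^sup>2 \<le> real N * (a\<^sup>2 * (1 - r))"
    using N_bound \<epsilon>f \<Delta> r(2) by (simp add: a_def pos_divide_le_eq power_mult_distrib mult_ac)
  then have "\<sigma>\<^sup>2 / (real N * a\<^sup>2) \<le> 1 - r"
    using N_pos \<open>0 < a\<close> by (simp add: pos_divide_le_eq mult_ac)
  note good = prob_sample_avgs_close_ge[where F=F and y=y and f=f,
      OF P integ integ2 mean var N_pos \<open>0 < a\<close> r(1) this, folded A_def]
  have "r ^ CARD('n option) = \<alpha>m"
    unfolding r_def using \<alpha>m by (intro real_root_pow_pos2) auto
  with good have "\<alpha>m \<le> measure (PiM (UNIV \<times> {..<N}) (\<lambda>_. P)) A" by simp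
  moreover have "\<bar>sample_avg F N y \<omega> $ i - f (y i)\<bar> \<le> \<epsilon>f * \<Delta>\<^sup>2" if "\<omega> \<in> A" for \<omega> i
    using that by (auto simp: A_def a_def less_imp_le)
  ultimately show ?thesis
    unfolding Let_def using good(1) model_error_bounds[OF deriv lip \<Delta> ypts inv] by blast
qed

end
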